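(* Let $\lambda=2\cos(\pi/5)$ and let $H_5$ be the subgroup of $SL(2,\mathbb R)$ generated by $S=\begin{pmatrix}0&1\\-1&0\end{pmatrix}$ and $T=\begin{pmatrix}1&\lambda\\0&1\end{pmatrix}$. Let $p$ be an odd rational prime and set $a=2\lambda^2$, $c=p\lambda^3$. Then for every $m\in\mathbb Z$, $$\begin{pmatrix}1-acm\lambda & a^2m\lambda\\ -c^2m\lambda & 1+acm\lambda\end{pmatrix}\in H(m).$$
   Context: For $m\in\mathbb Z$, $H(m)=\{(a_{ij})\in H_5 : a_{11}-1,\ a_{22}-1,\ a_{12},\ a_{21}\in m\mathbb Z[\lambda]\}$. *)

theory Defs
  imports "HOL-Analysis.Analysis" "HOL-Computational_Algebra.Polynomial"
begin

definition lam :: real where "lam = 2 * cos (pi / 5)"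

definition mat2 :: "real \<Rightarrow> real \<Rightarrow> real \<Rightarrow> real \<Rightarrow> real^2^2" where
  "mat2 a b c d = (\<chi> i j. if i = 1 then (if j = 1 then a else b) else (if j = 1 then c else d))"

definition Smat :: "real^2^2" where "Smat = mat2 0 1 (-1) 0"
definition Tmat :: "real^2^2" where "Tmat = mat2 1 lam 0 1"

inductive_set H5 :: "(real^2^2) set" where
  H5_one: "mat 1 \<in> H5"
| H5_S: "Smat \<in> H5"
| H5_T: "Tmat \<in> H5"
| H5_mult: "A \<in> H5 \<Longrightarrow> B \<in> H5 \<Longrightarrow> A ** B \<in> H5"
| H5_inv: "A \<in> H5 \<Longrightarrow> matrix_inv A \<in> H5"

definition Zlam :: "real set" where
  "Zlam = {poly (map_poly of_int p) lam | p :: int poly. True}"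

definition mZlam :: "int \<Rightarrow> real set" where
  "mZlam m = {of_int m * x | x. x \<in> Zlam}"

definition Hm :: "int \<Rightarrow> (real^2^2) set" where
  "Hm m = {A \<in> H5. A$1$1 - 1 \<in> mZlam m \<and> A$2$2 - 1 \<in> mZlam m
                 \<and> A$1$2 \<in> mZlam m \<and> A$2$1 \<in> mZlam m}"

end

theory Submission
  imports Defs
begin

text \<open>The matrix is \<open>I + m\<lambda> (a, c)\<^sup>T (-c, a)\<close>, the conjugate \<open>U T\<^sup>m U\<^sup>-\<^sup>1\<close> of a power
  of \<open>T\<close> by any determinant-one \<open>U\<close> whose first column is \<open>\<plusminus>(a, c)\<close>. Using \<open>\<lambda>\<^sup>2 = \<lambda> + 1\<close>, the
  column \<open>-(2\<lambda>\<^sup>2, p\<lambda>\<^sup>3)\<close> is the first column of an explicit word in \<open>S\<close> and \<open>T\<close> depending on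
  \<open>(p - 1)/2\<close>, and the adjugate of that word is again a word in \<open>S\<close> and \<open>T\<close>. Hence the matrix lies
  in \<open>H\<^sub>5\<close>, and its entries (minus the identity) are integer multiples of powers of \<open>\<lambda>\<close> times \<open>m\<close>.\<close>

lemma lam_squared: "lam\<^sup>2 = lam + 1"
proof -
  define c where "c = cos (pi / 5)"
  have "c > 0"
    unfolding c_def using pi_gt_zero by (intro cos_gt_zero_pi) linarith+
  have "cos (3 * (pi / 5)) = - cos (2 * (pi / 5))"
    using cos_pi_minus[of "2 * (pi / 5)"] by (simp add: field_simps)
  then have "4 * c^3 - 3 * c = - (2 * c\<^sup>2 - 1)"
    unfolding c_def cos_treble_cos cos_double_cos by simp
  then have "(c + 1) * (4 * c\<^sup>2 - 2 * c - 1) = 0"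
    by algebra
  with \<open>c > 0\<close> have "4 * c\<^sup>2 - 2 * c - 1 = 0"
    by simp
  then show ?thesis
    unfolding lam_def c_def[symmetric] by algebra
qed

lemma mat2_mult:
  "mat2 a b c d ** mat2 e f g h = mat2 (a*e + b*g) (a*f + b*h) (c*e + d*g) (c*f + d*h)"
  unfolding mat2_def matrix_matrix_mult_def by (auto simp: vec_eq_iff UNIV_2 forall_2)

lemma mat_one_eq_mat2: "(mat 1 :: real^2^2) = mat2 1 0 0 1"
  unfolding mat2_def mat_def by (auto simp: vec_eq_iff forall_2)

lemma mat2_nth:
  "mat2 a b c d $1$1 = a" "mat2 a b c d $1$2 = b" "mat2 a b c d $2$1 = c" "mat2 a b c d $2$2 = d"
  by (simp_all add: mat2_def)

lemma mat2_conj_translation: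
  assumes "a * d - b * c = 1"
  shows "mat2 a b c d ** mat2 1 x 0 1 ** mat2 d (- b) (- c) a
           = mat2 (1 - a * c * x) (a\<^sup>2 * x) (- (c\<^sup>2 * x)) (1 + a * c * x)"
proof -
  have "a * d = 1 + b * c"
    using assms by simp
  then show ?thesis
    unfolding mat2_mult by (simp add: algebra_simps power2_eq_square)
qed

lemma H5_two_sided_inverse:
  assumes "A \<in> H5" "A ** B = mat 1" "B ** A = mat 1"
  shows "B \<in> H5"
proof -
  have "\<exists>A'. A ** A' = mat 1 \<and> A' ** A = mat 1"
    using assms(2,3) by blast
  then have "matrix_inv A ** A = mat 1"
    unfolding matrix_inv_def by (rule someI2_ex) blast
  then have "matrix_inv A = B"
    by (metis assms(2) matrix_mul_assoc matrix_mul_lid matrix_mul_rid)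
  with assms(1) show ?thesis
    using H5_inv by blast
qed

definition Tpow :: "int \<Rightarrow> real^2^2" where
  "Tpow n = mat2 1 (of_int n * lam) 0 1"

lemma Tpow_of_nat_in_H5: "Tpow (int n) \<in> H5"
proof (induction n)
  case 0
  then show ?case
    using H5_one by (simp add: Tpow_def mat_one_eq_mat2)
next
  case (Suc n)
  have "Tpow (int (Suc n)) = Tpow (int n) ** Tmat"
    by (simp add: Tpow_def Tmat_def mat2_mult distrib_right)
  then show ?case
    using Suc H5_T H5_mult by simp
qed

lemma Tpow_in_H5: "Tpow n \<in> H5"
proof (cases n rule: int_cases2)
  case (nonneg k)
  then show ?thesis
    using Tpow_of_nat_in_H5 by simp
next
  case (nonpos k)
  show ?thesis
    by (rule H5_two_sided_inverse[OF Tpow_of_nat_in_H5[of k]])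
       (simp_all add: nonpos Tpow_def mat2_mult mat_one_eq_mat2)
qed

lemma S_T_word_eq:
  "Smat ** Tpow (- k) ** Smat ** Tpow 1 ** Smat ** Tpow 1 ** Smat ** Tpow (- 1) ** Smat
     ** Tpow (- 1) ** Smat
   = mat2 (- (2 * lam\<^sup>2)) (- (lam ^ 3))
       (- ((2 * of_int k + 1) * lam ^ 3)) (- (2 + 2 * of_int k) - (1 + 3 * of_int k) * lam)"
  unfolding Smat_def Tpow_def mat2_mult of_int_1 of_int_minus using lam_squared
  by (intro arg_cong4[where f = mat2]) algebra+

lemma S_T_word_adjugate_eq:
  "Smat ** Tpow 1 ** Smat ** Tpow 1 ** Smat ** Tpow (- 1) ** Smat ** Tpow (- 1) ** Smat
     ** Tpow k ** Smat
   = mat2 (- (2 + 2 * of_int k) - (1 + 3 * of_int k) * lam) (lam ^ 3)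
       ((2 * of_int k + 1) * lam ^ 3) (- (2 * lam\<^sup>2))"
  unfolding Smat_def Tpow_def mat2_mult of_int_1 of_int_minus using lam_squared
  by (intro arg_cong4[where f = mat2]) algebra+

lemma int_lam_monomial_in_mZlam: "of_int m * (of_int c * lam ^ n) \<in> mZlam m"
proof -
  have "poly (map_poly of_int (monom c n)) lam = of_int c * lam ^ n"
    by (simp add: map_poly_monom poly_monom)
  then have "of_int c * lam ^ n \<in> Zlam"
    unfolding Zlam_def mem_Collect_eq by (intro exI[of _ "monom c n"]) simp
  then show ?thesis
    unfolding mZlam_def by blast
qed

lemma conj_Tpow_in_H5:
  fixes k m :: int
  defines "a \<equiv> 2 * lam\<^sup>2" and "c \<equiv> (2 * of_int k + 1) * lam ^ 3"
  shows "mat2 (1 - a * c * of_int m * lam) (a\<^sup>2 * of_int m * lam)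
           (- (c\<^sup>2 * of_int m * lam)) (1 + a * c * of_int m * lam) \<in> H5"
proof -
  define d where "d = - (2 + 2 * of_int k) - (1 + 3 * of_int k) * lam"
  let ?U = "mat2 (- a) (- (lam ^ 3)) (- c) d"
  let ?V = "mat2 d (lam ^ 3) c (- a)"
  have "?U \<in> H5" "?V \<in> H5"
    unfolding a_def c_def d_def
      S_T_word_eq[symmetric] S_T_word_adjugate_eq[symmetric]
    by (intro H5_mult H5_S Tpow_in_H5)+
  then have "?U ** Tpow m ** ?V \<in> H5"
    by (intro H5_mult Tpow_in_H5)
  moreover have "(- a) * d - (- (lam ^ 3)) * (- c) = 1"
    unfolding a_def c_def d_def using lam_squared by algebra
  from mat2_conj_translation[OF this, of "of_int m * lam"]
  have "?U ** Tpow m ** ?V = mat2 (1 - a * c * of_int m * lam) (a\<^sup>2 * of_int m * lam)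
           (- (c\<^sup>2 * of_int m * lam)) (1 + a * c * of_int m * lam)"
    by (simp add: Tpow_def mult.assoc)
  ultimately show ?thesis
    by simp
qed

theorem lemma3p3:
  fixes p :: nat and a c :: real
  assumes "prime p" and "odd p"
    and "a = 2 * lam ^ 2" and "c = real p * lam ^ 3"
  shows "\<forall>m::int. mat2 (1 - a * c * of_int m * lam) (a^2 * of_int m * lam)
                     (- (c^2 * of_int m * lam)) (1 + a * c * of_int m * lam) \<in> Hm m"
proof
  fix m :: int
  obtain q where "p = 2 * q + 1"
    using \<open>odd p\<close> oddE by blast
  then have "c = (2 * of_int (int q) + 1) * lam ^ 3"
    using assms(4) by simp
  then have "mat2 (1 - a * c * of_int m * lam) (a^2 * of_int m * lam)
               (- (c^2 * of_int m * lam)) (1 + a * c * of_int m * lam) \<in> H5"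
    using conj_Tpow_in_H5[of q m] assms(3) by simp
  moreover have "1 - a * c * of_int m * lam - 1 \<in> mZlam m"
    "1 + a * c * of_int m * lam - 1 \<in> mZlam m"
    "a\<^sup>2 * of_int m * lam \<in> mZlam m"
    "- (c\<^sup>2 * of_int m * lam) \<in> mZlam m"
    using int_lam_monomial_in_mZlam[of m "- 2 * int p" 6] int_lam_monomial_in_mZlam[of m "2 * int p" 6]
      int_lam_monomial_in_mZlam[of m 4 5] int_lam_monomial_in_mZlam[of m "- (int p)\<^sup>2" 7]
    unfolding assms(3,4) by (simp_all add: algebra_simps power_numeral_reduce)
  ultimately show "mat2 (1 - a * c * of_int m * lam) (a^2 * of_int m * lam)
                     (- (c^2 * of_int m * lam)) (1 + a * c * of_int m * lam) \<in> Hm m"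
    unfolding Hm_def mem_Collect_eq mat2_nth by blast
qed

end
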